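(* Let $K$ be a field and $T$ a ring extension of $K$. If $V$ is a maximal subring of $T$ which is integrally closed in $T$ and $K\not\subseteq V$, then $V\cap K$ is a maximal subring of $K$; in particular, $V\cap K$ is a one-dimensional valuation domain.
   Context: All rings are commutative with $1\neq0$ and subrings are unital. A maximal subring is a proper subring maximal with respect to inclusion among proper subrings. *)

theory Defs
  imports "HOL-Algebra.Algebra"
begin

definition maximal_subring :: "'a set \<Rightarrow> ('a, 'b) ring_scheme \<Rightarrow> bool" where
  "maximal_subring S R \<longleftrightarrow> subring S R \<and> S \<noteq> carrier R \<and>
     (\<forall>S'. subring S' R \<and> S \<subseteq> S' \<and> S' \<noteq> carrier R \<longrightarrow> S' = S)"

text \<open>x is integral over the subset S of R: root of a monic polynomial with coefficients in S
  (polynomials are coefficient lists, highest degree first).\<close>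
definition integral_over :: "('a, 'b) ring_scheme \<Rightarrow> 'a set \<Rightarrow> 'a \<Rightarrow> bool" where
  "integral_over R S x \<longleftrightarrow> x \<in> carrier R \<and>
     (\<exists>p. set p \<subseteq> S \<and> p \<noteq> [] \<and> hd p = \<one>\<^bsub>R\<^esub> \<and> ring.eval R p x = \<zero>\<^bsub>R\<^esub>)"

definition integrally_closed_in :: "'a set \<Rightarrow> ('a, 'b) ring_scheme \<Rightarrow> bool" where
  "integrally_closed_in S R \<longleftrightarrow> (\<forall>x \<in> carrier R. integral_over R S x \<longrightarrow> x \<in> S)"

definition valuation_domain :: "('a, 'b) ring_scheme \<Rightarrow> bool" where
  "valuation_domain R \<longleftrightarrow> domain R \<and>
     (\<forall>a \<in> carrier R. \<forall>b \<in> carrier R.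
        (\<exists>c \<in> carrier R. b = a \<otimes>\<^bsub>R\<^esub> c) \<or> (\<exists>c \<in> carrier R. a = b \<otimes>\<^bsub>R\<^esub> c))"

definition krull_dim_one :: "('a, 'b) ring_scheme \<Rightarrow> bool" where
  "krull_dim_one R \<longleftrightarrow>
     (\<exists>P Q. primeideal P R \<and> primeideal Q R \<and> P \<subset> Q) \<and>
     \<not> (\<exists>P Q U. primeideal P R \<and> primeideal Q R \<and> primeideal U R \<and> P \<subset> Q \<and> Q \<subset> U)"

end

theory Submission
  imports Defs
begin

(* Let x be a nonzero element of K outside V. By maximality V[x] = T, so x^-1 = p(x) for a
   polynomial p over V; multiplying by x^-n, n = length p, turns this into a monic equation for
   x^-1 over V, so x^-1 \<in> V by integral closedness. Hence V \<inter> K is a valuation ring of K.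
   The same computation for an arbitrary y = p(x) in T gives y x^-n \<in> V. For y \<in> K this yields
   the maximality of V \<inter> K in K (a subring containing V \<inter> K and x contains y = (y x^-n) x^n)
   and rank one: every non-unit m of V \<inter> K has a power divisible by any nonzero q, so every
   nonzero prime ideal contains all non-units. *)

lemma (in ring) eval_in_subring:
  assumes "subring S R" "set p \<subseteq> S" "x \<in> S"
  shows "eval p x \<in> S"
  using ring.eval_in_carrier[OF subring_is_ring[OF assms(1)], of p x] assms by simp

lemma (in ring) eval_map_minus:
  assumes "set p \<subseteq> carrier R" "x \<in> carrier R"
  shows "eval (map (\<lambda>a. \<ominus> a) p) x = \<ominus> eval p x"
  using assms(1)
proof (induction p)
  case Nil
  then show ?case by simp
next
  case (Cons c p)
  then show ?case
    using eval_in_carrier[of p x] assms(2) by (simp add: l_minus minus_add)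
qed

lemma (in cring) eval_reciprocal:
  assumes p: "set p \<subseteq> carrier R" and xu: "x \<in> carrier R" "u \<in> carrier R" "x \<otimes> u = \<one>"
  shows "eval p x \<otimes> u [^] length p = eval (rev p) u \<otimes> u"
  using p
proof (induction p)
  case Nil
  then show ?case using xu by simp
next
  case (Cons c p)
  let ?m = "length p"
  have c: "c \<in> carrier R" and p: "set p \<subseteq> carrier R"
    using Cons.prems by auto
  have ev: "eval p x \<in> carrier R" "eval (rev p) u \<in> carrier R"
    using eval_in_carrier p xu by auto
  have inv_pow: "x [^] ?m \<otimes> u [^] ?m = \<one>"
    using nat_pow_distrib[OF xu(1,2), of ?m] xu(3) by simp
  have "eval (c # p) x \<otimes> u [^] length (c # p) = (c \<otimes> x [^] ?m \<oplus> eval p x) \<otimes> (u [^] ?m \<otimes> u)"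
    by simp
  also have "\<dots> = c \<otimes> (x [^] ?m \<otimes> u [^] ?m) \<otimes> u \<oplus> (eval p x \<otimes> u [^] ?m) \<otimes> u"
    using c ev(1) xu(2) nat_pow_closed[OF xu(1), of ?m] nat_pow_closed[OF xu(2), of ?m]
    by algebra
  also have "\<dots> = (eval (rev p) u \<otimes> u \<oplus> c) \<otimes> u"
    using Cons.IH[OF p] inv_pow c ev(2) xu(2) by algebra
  also have "\<dots> = eval (rev (c # p)) u \<otimes> u"
    using eval_append_aux[of "rev p" c u] p c xu(2) by simp
  finally show ?case .
qed

lemma (in ring) subring_nat_pow_closed:
  assumes "subring S R" "a \<in> S"
  shows "a [^] (n::nat) \<in> S"
  by (induction n) (use assms subringE(3,6)[OF assms(1)] in auto)

lemma (in ring) subring_restrict_iff: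
  assumes "subring K R" "S \<subseteq> K"
  shows "subring S (R\<lparr>carrier := K\<rparr>) \<longleftrightarrow> subring S R"
  using ring.subring_iff[OF subring_is_ring[OF assms(1)], of S] subring_iff[of S] assms
    subringE(1)[OF assms(1)] by auto

(* The library's simple_extension_is_subring is stated for domains only. *)
lemma (in cring) subring_simple_extension:
  assumes S: "subring S R" and x: "x \<in> carrier R"
  shows "subring (simple_extension S x) R"
proof -
  let ?E = "simple_extension S x"
  have E: "a \<in> ?E \<longleftrightarrow> (\<exists>p. polynomial S p \<and> a = eval p x)" for a
    using simple_extension_as_eval_img[OF subringE(1)[OF S] x] univ_poly_carrier by blast
  have S_E: "S \<subseteq> ?E"
    using simple_extension_incl[OF subringE(1)[OF S] x] .
  have mult: "a \<otimes> b \<in> ?E" if "a \<in> ?E" "b \<in> ?E" for a b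
  proof -
    obtain p q where p: "polynomial S p" "a = eval p x" and q: "polynomial S q" "b = eval q x"
      using \<open>a \<in> ?E\<close> \<open>b \<in> ?E\<close> E by blast
    have "eval (poly_mult p q) x = a \<otimes> b"
      using eval_poly_mult[OF polynomial_in_carrier[OF S p(1)] polynomial_in_carrier[OF S q(1)] x] p q
      by simp
    then show ?thesis
      using E poly_mult_closed[OF S p(1) q(1)] by metis
  qed
  show ?thesis
  proof (rule subringI)
    show "?E \<subseteq> carrier R"
      using simple_extension_in_carrier[OF subringE(1)[OF S] x] .
    show "\<one> \<in> ?E"
      using S_E subringE(3)[OF S] by blast
    show "a \<otimes> b \<in> ?E" if "a \<in> ?E" "b \<in> ?E" for a b
      using mult that .
    show "\<ominus> a \<in> ?E" if a: "a \<in> ?E" for a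
    proof -
      have "\<ominus> a = \<ominus> \<one> \<otimes> a"
        using a \<open>?E \<subseteq> carrier R\<close> by (auto simp: l_minus)
      then show ?thesis
        using mult[OF _ a] S_E subringE(3,5)[OF S] by auto
    qed
    show "a \<oplus> b \<in> ?E" if "a \<in> ?E" "b \<in> ?E" for a b
    proof -
      obtain p q where p: "polynomial S p" "a = eval p x" and q: "polynomial S q" "b = eval q x"
        using \<open>a \<in> ?E\<close> \<open>b \<in> ?E\<close> E by blast
      have "eval (poly_add p q) x = a \<oplus> b"
        using eval_poly_add[OF polynomial_in_carrier[OF S p(1)] polynomial_in_carrier[OF S q(1)] x] p q
        by simp
      then show ?thesis
        using E poly_add_closed[OF S p(1) q(1)] by metis
    qed
  qed
qed

lemma (in cring) maximal_subring_simple_extension: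
  assumes V: "maximal_subring V R" and x: "x \<in> carrier R" "x \<notin> V"
  shows "simple_extension V x = carrier R"
proof -
  have V_subring: "subring V R"
    using V unfolding maximal_subring_def by blast
  then have "V \<subseteq> simple_extension V x" "x \<in> simple_extension V x"
    using simple_extension_incl[OF subringE(1)[OF V_subring] x(1)] simple_extension_mem[OF _ x(1)]
    by auto
  then show ?thesis
    using V V_subring x(2) subring_simple_extension[OF V_subring x(1)]
    unfolding maximal_subring_def by blast
qed

locale integrally_closed_maximal_subring = cring R for R (structure) +
  fixes V :: "'a set"
  assumes maximal: "maximal_subring V R"
    and integrally_closed: "integrally_closed_in V R"
begin

lemma subring: "subring V R"
  using maximal unfolding maximal_subring_def by blast

lemma exists_eval_eq:
  assumes "x \<in> carrier R" "x \<notin> V" "y \<in> carrier R"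
  shows "\<exists>p. set p \<subseteq> V \<and> y = eval p x"
proof -
  have "y \<in> (\<lambda>p. eval p x) ` carrier (V[X])"
    using assms maximal_subring_simple_extension[OF maximal]
      simple_extension_as_eval_img[OF subringE(1)[OF subring]] by simp
  then show ?thesis
    using polynomial_incl univ_poly_carrier by blast
qed

lemma Units_inv_mem:
  assumes x: "x \<in> Units R" "x \<notin> V"
  shows "inv x \<in> V"
proof -
  let ?u = "inv x"
  have u: "?u \<in> Units R" "?u \<in> carrier R" "x \<in> carrier R" "x \<otimes> ?u = \<one>"
    using x(1) by auto
  obtain p where p: "set p \<subseteq> V" "?u = eval p x"
    using exists_eval_eq[OF u(3) x(2) u(2)] by blast
  have p_carrier: "set p \<subseteq> carrier R"
    using p(1) subringE(1)[OF subring] by blast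
  have ev: "eval (rev p) ?u \<in> carrier R"
    using eval_in_carrier[of "rev p" ?u] p_carrier u(2) by simp
  have "?u \<otimes> ?u [^] length p = ?u \<otimes> eval (rev p) ?u"
    using eval_reciprocal[OF p_carrier u(3,2,4)] p(2) ev u(2) m_comm by simp
  then have pow_eq: "?u [^] length p = eval (rev p) ?u"
    using u(1,2) ev by simp
  let ?q = "\<one> # map (\<lambda>a. \<ominus> a) (rev p)"
  have "eval ?q ?u = ?u [^] length p \<ominus> eval (rev p) ?u"
    using eval_map_minus[of "rev p" ?u] p_carrier u(2) by (simp add: minus_eq)
  then have "eval ?q ?u = \<zero>"
    using pow_eq ev by (simp add: r_right_minus_eq)
  moreover have "set ?q \<subseteq> V"
    using p(1) subringE(3,5)[OF subring] by auto
  ultimately have "integral_over R V ?u"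
    unfolding integral_over_def using u(2) by (intro conjI exI[of _ ?q]) auto
  then show ?thesis
    using integrally_closed u(2) unfolding integrally_closed_in_def by blast
qed

lemma mult_inv_pow_mem:
  assumes x: "x \<in> Units R" "x \<notin> V" and y: "y \<in> carrier R"
  shows "\<exists>n::nat. y \<otimes> inv x [^] n \<in> V"
proof -
  have u: "inv x \<in> V" "inv x \<in> carrier R" "x \<in> carrier R" "x \<otimes> inv x = \<one>"
    using Units_inv_mem[OF x] x(1) by auto
  obtain p where p: "set p \<subseteq> V" "y = eval p x"
    using exists_eval_eq[OF u(3) x(2) y] by blast
  have "y \<otimes> inv x [^] length p = eval (rev p) (inv x) \<otimes> inv x"
    using eval_reciprocal[OF _ u(3,2,4)] p subringE(1)[OF subring] by blast
  also have "\<dots> \<in> V"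
    using eval_in_subring[OF subring, of "rev p"] p(1) u(1) subringE(6)[OF subring] by simp
  finally show ?thesis ..
qed

end

lemma (in ring) proper_ideal_nonunits:
  assumes "ideal I R" "I \<noteq> carrier R"
  shows "I \<subseteq> carrier R - Units R"
proof
  fix u assume u: "u \<in> I"
  have "u \<notin> Units R"
  proof
    assume "u \<in> Units R"
    then have "\<one> \<in> I"
      using ideal.I_l_closed[OF assms(1) u, of "inv u"] by simp
    then show False
      using ideal.one_imp_carrier[OF assms(1)] assms(2) by blast
  qed
  then show "u \<in> carrier R - Units R"
    using u ideal.Icarr[OF assms(1)] by blast
qed

lemma (in cring) primeideal_pow_imp_mem:
  assumes "primeideal P R" "a \<in> carrier R" "a [^] (n::nat) \<in> P"
  shows "a \<in> P"
  using assms(3)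
proof (induction n)
  case 0
  then show ?case
    using ideal.one_imp_carrier[OF primeideal.axioms(1)[OF assms(1)]] primeideal.I_notcarr[OF assms(1)]
    by simp
next
  case (Suc n)
  then show ?case
    using primeideal.I_prime[OF assms(1), of "a [^] n" a] assms(2) by auto
qed

lemma valuation_domain_nonunits_primeideal:
  fixes R (structure)
  assumes "valuation_domain R"
  shows "primeideal (carrier R - Units R) R"
proof -
  interpret domain R
    using assms unfolding valuation_domain_def by blast
  let ?N = "carrier R - Units R"
  have mult: "x \<otimes> a \<in> ?N" if "a \<in> ?N" "x \<in> carrier R" for a x
    using that unit_factor[of a x] m_comm[of x a] by auto
  have add: "a \<oplus> b \<in> ?N" if ab: "a \<in> ?N" "b \<in> ?N" for a b
  proof -
    have "a \<in> carrier R" "b \<in> carrier R"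
      using ab by auto
    then consider c where "c \<in> carrier R" "b = a \<otimes> c" | c where "c \<in> carrier R" "a = b \<otimes> c"
      using assms unfolding valuation_domain_def by blast
    then show ?thesis
    proof cases
      case (1 c)
      then have "a \<oplus> b = (\<one> \<oplus> c) \<otimes> a"
        using \<open>a \<in> carrier R\<close> by algebra
      then show ?thesis
        using mult[OF ab(1)] \<open>c \<in> carrier R\<close> by simp
    next
      case (2 c)
      then have "a \<oplus> b = (c \<oplus> \<one>) \<otimes> b"
        using \<open>b \<in> carrier R\<close> by algebra
      then show ?thesis
        using mult[OF ab(2)] \<open>c \<in> carrier R\<close> by simp
    qed
  qed
  have "subgroup ?N (add_monoid R)"
  proof (rule add.subgroupI)
    show "?N \<subseteq> carrier R" by auto
    show "?N \<noteq> {}"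
      using zero_closed one_not_zero Units_r_inv_ex[of \<zero>] by force
    show "\<ominus> a \<in> ?N" if "a \<in> ?N" for a
      using mult[OF that, of "\<ominus> \<one>"] that by (simp add: l_minus)
    show "a \<oplus> b \<in> ?N" if "a \<in> ?N" "b \<in> ?N" for a b
      using add that .
  qed
  then show ?thesis
    by (intro primeidealI2 additive_subgroupI is_cring)
      (use mult m_comm Units_m_closed in \<open>auto simp: Units_one_closed\<close>)
qed

lemma (in cring) nonunits_subset_primeideal:
  assumes Q: "primeideal Q R" "q \<in> Q"
    and powers: "\<And>m. m \<in> carrier R - Units R \<Longrightarrow> \<exists>n::nat. q divides m [^] n"
  shows "carrier R - Units R \<subseteq> Q"
proof
  fix m assume m: "m \<in> carrier R - Units R"
  then obtain n :: nat and c where c: "c \<in> carrier R" "m [^] n = q \<otimes> c"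
    using powers unfolding factor_def by blast
  then have "m [^] n \<in> Q"
    using ideal.I_r_closed[OF primeideal.axioms(1)[OF Q(1)] Q(2) c(1)] by simp
  then show "m \<in> Q"
    using primeideal_pow_imp_mem[OF Q(1)] m by blast
qed

lemma valuation_domain_krull_dim_one:
  fixes R (structure)
  assumes val: "valuation_domain R"
    and not_field: "\<exists>m \<in> carrier R - Units R. m \<noteq> \<zero>"
    and powers: "\<And>q m. q \<in> carrier R - {\<zero>} \<Longrightarrow> m \<in> carrier R - Units R \<Longrightarrow>
      \<exists>n::nat. q divides m [^] n"
  shows "krull_dim_one R"
proof -
  interpret domain R
    using val unfolding valuation_domain_def by blast
  have "{\<zero>} \<subset> carrier R - Units R"
    using not_field zero_closed one_not_zero Units_r_inv_ex[of \<zero>] by force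
  then have chain: "\<exists>P Q. primeideal P R \<and> primeideal Q R \<and> P \<subset> Q"
    using zeroprimeideal valuation_domain_nonunits_primeideal[OF val] by blast
  have no_chain: False
    if primes: "primeideal P R" "primeideal Q R" "primeideal U R" and "P \<subset> Q" "Q \<subset> U" for P Q U
  proof -
    obtain q where q: "q \<in> Q" "q \<notin> P"
      using \<open>P \<subset> Q\<close> by blast
    have "q \<in> carrier R - {\<zero>}"
      using q ideal.Icarr[OF primeideal.axioms(1)[OF primes(2)]]
        additive_subgroup.zero_closed[OF ideal.axioms(1)[OF primeideal.axioms(1)[OF primes(1)]]]
      by auto
    then have "carrier R - Units R \<subseteq> Q"
      using nonunits_subset_primeideal[OF primes(2) q(1)] powers by blast
    moreover have "U \<subseteq> carrier R - Units R"
      using proper_ideal_nonunits primeideal.axioms(1)[OF primes(3)] primeideal.I_notcarr[OF primes(3)]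
      by metis
    ultimately show False
      using \<open>Q \<subset> U\<close> by blast
  qed
  show ?thesis
    unfolding krull_dim_one_def using chain no_chain by blast
qed

locale subfield_trace = integrally_closed_maximal_subring T V for T (structure) and V +
  fixes K :: "'a set"
  assumes subfield: "subfield K T"
    and not_subset: "\<not> K \<subseteq> V"
begin

abbreviation trace_ring :: "('a, 'b) ring_scheme"
  where "trace_ring \<equiv> T\<lparr>carrier := V \<inter> K\<rparr>"

lemma K_subring: "subring K T"
  using subfieldE(1)[OF subfield] .

lemma trace_subring: "subring (V \<inter> K) T"
  using subring_inter[OF subring K_subring] .

lemma K_Units:
  assumes "k \<in> K" "k \<noteq> \<zero>"
  shows "k \<in> Units T" "inv k \<in> K" "inv k \<noteq> \<zero>"
  using subfield_m_inv[OF subfield, of k] assms subfieldE(3)[OF subfield]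
  unfolding Units_def by auto

lemma K_subset_subring:
  assumes S: "subring S T" "V \<inter> K \<subseteq> S" and s: "s \<in> S" "s \<in> K" "s \<notin> V"
  shows "K \<subseteq> S"
proof
  fix y assume y: "y \<in> K"
  have "s \<noteq> \<zero>"
    using s(3) subringE(2)[OF subring] by blast
  then have s_unit: "s \<in> Units T" "inv s \<in> K" "inv s \<in> carrier T" "s \<in> carrier T"
    using K_Units s(2) by auto
  obtain n :: nat where n: "y \<otimes> inv s [^] n \<in> V"
    using mult_inv_pow_mem[OF s_unit(1) s(3)] y subfieldE(3)[OF subfield] by blast
  have "y \<otimes> inv s [^] n \<in> K"
    using y s_unit(2) subring_nat_pow_closed[OF K_subring] subringE(6)[OF K_subring] by blast
  then have "(y \<otimes> inv s [^] n) \<otimes> s [^] n \<in> S"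
    using n S(2) subring_nat_pow_closed[OF S(1) s(1)] subringE(6)[OF S(1)] by blast
  moreover have "inv s [^] n \<otimes> s [^] n = \<one>"
    using nat_pow_distrib[OF s_unit(3,4), of n] s_unit(1) by simp
  ultimately show "y \<in> S"
    using y subfieldE(3)[OF subfield] s_unit by (auto simp: m_assoc)
qed

lemma maximal_subring_trace: "maximal_subring (V \<inter> K) (T\<lparr>carrier := K\<rparr>)"
  unfolding maximal_subring_def
proof (intro conjI allI impI)
  show "subring (V \<inter> K) (T\<lparr>carrier := K\<rparr>)"
    using subring_restrict_iff[OF K_subring] trace_subring by blast
  show "V \<inter> K \<noteq> carrier (T\<lparr>carrier := K\<rparr>)"
    using not_subset by auto
  fix S
  assume "subring S (T\<lparr>carrier := K\<rparr>) \<and> V \<inter> K \<subseteq> S \<and> S \<noteq> carrier (T\<lparr>carrier := K\<rparr>)"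
  then have S: "subring S T" "S \<subseteq> K" "V \<inter> K \<subseteq> S" "S \<noteq> K"
    using subring_restrict_iff[OF K_subring] subringE(1)[of S "T\<lparr>carrier := K\<rparr>"] by auto
  show "S = V \<inter> K"
    using K_subset_subring[OF S(1,3)] S(2-4) by blast
qed

lemma domain_trace_ring: "domain trace_ring"
proof -
  have "domain (T\<lparr>carrier := K\<rparr>)"
    using subdomain_is_domain[OF subfield.axioms(1)[OF subfield]] .
  moreover have "subring (V \<inter> K) (T\<lparr>carrier := K\<rparr>)"
    using subring_restrict_iff[OF K_subring] trace_subring by blast
  ultimately show ?thesis
    using domain.subring_is_domain by fastforce
qed

lemma Units_trace_ring_iff:
  assumes "a \<in> V \<inter> K" "a \<noteq> \<zero>"
  shows "a \<in> Units trace_ring \<longleftrightarrow> inv a \<in> V"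
proof
  have a: "a \<in> Units T" "inv a \<in> K"
    using K_Units assms by auto
  show "inv a \<in> V" if unit: "a \<in> Units trace_ring"
  proof -
    obtain b where "b \<in> V \<inter> K" "b \<otimes> a = \<one>" "a \<otimes> b = \<one>"
      using unit unfolding Units_def by auto
    moreover have "b = inv a"
      using inv_unique'[of a b] calculation assms(1) subringE(1)[OF trace_subring] by auto
    ultimately show ?thesis
      by simp
  qed
  show "a \<in> Units trace_ring" if "inv a \<in> V"
  proof -
    have "inv a \<in> V \<inter> K" "inv a \<otimes> a = \<one>" "a \<otimes> inv a = \<one>"
      using that a by auto
    then show ?thesis
      using assms(1) unfolding Units_def by auto
  qed
qed

lemma valuation_domain_trace_ring: "valuation_domain trace_ring"
proof -
  have "(\<exists>c \<in> V \<inter> K. b = a \<otimes> c) \<or> (\<exists>c \<in> V \<inter> K. a = b \<otimes> c)"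
    if ab: "a \<in> V \<inter> K" "b \<in> V \<inter> K" for a b
  proof (cases "a = \<zero> \<or> b = \<zero>")
    case True
    then have "b = a \<otimes> \<zero> \<or> a = b \<otimes> \<zero>"
      using ab subringE(1)[OF trace_subring] by auto
    then show ?thesis
      using subringE(2)[OF trace_subring] by blast
  next
    case False
    then have units: "a \<in> Units T" "b \<in> Units T" "inv a \<in> K" "inv b \<in> K"
      using K_Units ab by auto
    then have carr: "inv a \<in> carrier T" "a \<in> carrier T" "b \<in> carrier T" "inv b \<in> carrier T"
      by auto
    let ?c = "inv a \<otimes> b"
    have "?c \<otimes> (a \<otimes> inv b) = (inv a \<otimes> a) \<otimes> (b \<otimes> inv b)"
      using carr by algebra
    then have inv_c: "inv ?c = a \<otimes> inv b"
      using units by (intro comm_inv_char) auto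
    have c_unit: "?c \<in> Units T"
      using units(1,2) by simp
    have in_K: "?c \<in> K" "a \<otimes> inv b \<in> K"
      using units ab subringE(6)[OF K_subring] by auto
    have "b = a \<otimes> ?c"
      using m_assoc[OF carr(2,1,3)] units carr by simp
    moreover have "a = b \<otimes> (a \<otimes> inv b)"
      using m_lcomm[OF carr(3,2,4)] units carr by simp
    moreover have "?c \<in> V \<or> inv ?c \<in> V"
      using Units_inv_mem[OF c_unit] by blast
    ultimately show ?thesis
      using in_K inv_c by auto
  qed
  then show ?thesis
    unfolding valuation_domain_def using domain_trace_ring by simp
qed

lemma trace_ring_not_field: "\<exists>m \<in> carrier trace_ring - Units trace_ring. m \<noteq> \<zero>"
proof -
  obtain s where s: "s \<in> K" "s \<notin> V"
    using not_subset by blast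
  then have "s \<noteq> \<zero>"
    using subringE(2)[OF subring] by blast
  then have s_unit: "s \<in> Units T" "inv s \<in> K" "inv s \<noteq> \<zero>"
    using K_Units s(1) by auto
  then have "inv s \<in> V \<inter> K"
    using Units_inv_mem s(2) by blast
  moreover have "inv s \<notin> Units trace_ring"
    using Units_trace_ring_iff[OF calculation s_unit(3)] s_unit(1) s(2) by simp
  ultimately show ?thesis
    using s_unit(3) by auto
qed

lemma trace_ring_divides_nonunit_pow:
  assumes q: "q \<in> carrier trace_ring - {\<zero>}" and m: "m \<in> carrier trace_ring - Units trace_ring"
  shows "\<exists>n::nat. q divides\<^bsub>trace_ring\<^esub> m [^]\<^bsub>trace_ring\<^esub> n"
proof (cases "m = \<zero>")
  case True
  have "m [^] (1::nat) = q \<otimes> \<zero>"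
    using True q subringE(1)[OF trace_subring] by auto
  then show ?thesis
    unfolding factor_def nat_pow_consistent[symmetric]
    using subringE(2)[OF trace_subring] by (intro exI[of _ "1::nat"] bexI[of _ \<zero>]) simp_all
next
  case False
  have q_unit: "q \<in> Units T" "inv q \<in> K"
    using K_Units q by auto
  have m_unit: "m \<in> Units T" "inv m \<in> Units T" "inv m \<notin> V"
    using K_Units(1) Units_trace_ring_iff False m by auto
  obtain n :: nat where n: "inv q \<otimes> inv (inv m) [^] n \<in> V"
    using mult_inv_pow_mem[OF m_unit(2,3)] q_unit by blast
  have "inv q \<otimes> m [^] n \<in> V \<inter> K"
    using n m_unit(1) q_unit(2) m subring_nat_pow_closed[OF K_subring] subringE(6)[OF K_subring]
    by auto
  moreover have "m [^] n = q \<otimes> (inv q \<otimes> m [^] n)"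
    using m_assoc[of q "inv q" "m [^] n"] q_unit(1) Units_closed[OF q_unit(1)] Units_closed[OF m_unit(1)]
    by simp
  ultimately show ?thesis
    unfolding factor_def nat_pow_consistent[symmetric] by fastforce
qed

lemma krull_dim_one_trace_ring: "krull_dim_one trace_ring"
  by (rule valuation_domain_krull_dim_one[OF valuation_domain_trace_ring])
    (use trace_ring_not_field trace_ring_divides_nonunit_pow in simp_all)

end

theorem lemma3p2:
  fixes T :: "('a, 'b) ring_scheme" and K V :: "'a set"
  assumes "cring T"
    and "subfield K T"
    and "maximal_subring V T"
    and "integrally_closed_in V T"
    and "\<not> K \<subseteq> V"
  shows "maximal_subring (V \<inter> K) (T\<lparr>carrier := K\<rparr>) \<and>
         valuation_domain (T\<lparr>carrier := V \<inter> K\<rparr>) \<and>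
         krull_dim_one (T\<lparr>carrier := V \<inter> K\<rparr>)"
proof -
  interpret subfield_trace T V K
    using assms unfolding subfield_trace_def subfield_trace_axioms_def
      integrally_closed_maximal_subring_def integrally_closed_maximal_subring_axioms_def
    by blast
  show ?thesis
    using maximal_subring_trace valuation_domain_trace_ring krull_dim_one_trace_ring by blast
qed

end
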